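(* For every combinatorial auction with nonempty winner set $W$, the BLO outcome $\pi^{BLO}$ and any MRC outcome $\pi^{MRC}$ satisfy $$\sum_{i\in N}\pi^{BLO}_i\ \ge\ \frac{4}{|W|+2+\frac{|W|\bmod 2}{|W|}}\ \sum_{i\in N}\pi^{MRC}_i .$$ The bound is tight: for every integer $k\ge1$ there is a combinatorial auction with $|W|=k$ and $\sum_i\pi^{MRC}_i>0$ for which equality holds.
   Context: A combinatorial auction (CA) has a finite set of bidders $N=\{1,\dots,n\}$, a finite set of items $M$, and for each bidder $i$ a valuation $v_i:2^M\to\mathbb{R}_{\ge 0}$ with $v_i(\emptyset)=0$ (bids are assumed equal to true valuations). For $S\subseteq N$ let $w(S)=\max\{\sum_{i\in S}v_i(a_i): a_i\subseteq M,\ a_i\cap a_j=\emptyset\ (i\ne j)\}$ (with $w(\emptyset)=0$). Fix an allocation $(a^*_i)_{i\in N}$ attaining $w(N)$; the winner set is $W=\{i: a^*_i\neq\emptyset\}$. The core is $U=\{\pi\in\mathbb{R}^N:\ \pi_i\ge 0\ \forall i\in N,\ \sum_{i\in N\setminus S}\pi_i\le w(N)-w(S)\ \forall S\subseteq N\}$. An MRC outcome is a $\pi\in U$ maximizing $\sum_{i\in N}\pi_i$ over $U$. For $x,y\in\mathbb{R}^n$, $x$ leximin-dominates $y$ if, writing $x_{(1)}\le\dots\le x_{(n)}$ and $y_{(1)}\le\dots\le y_{(n)}$ for the sorted entries, there is $0\le k\le n-1$ with $x_{(j)}=y_{(j)}$ for $j\le k$ and $x_{(k+1)}>y_{(k+1)}$.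 The BLO outcome $\pi^{BLO}$ is the (unique) $\pi\in U$ not leximin-dominated by any $\pi'\in U$. *)

theory Defs
  imports Complex_Main
begin

text \<open>Payment vectors in R^N are functions nat => real that vanish outside N.\<close>

definition bidders :: "nat \<Rightarrow> nat set" where
  "bidders n = {1..n}"

definition is_CA :: "nat \<Rightarrow> 'm set \<Rightarrow> (nat \<Rightarrow> 'm set \<Rightarrow> real) \<Rightarrow> bool" where
  "is_CA n M v \<longleftrightarrow> finite M \<and>
     (\<forall>i\<in>bidders n. v i {} = 0 \<and> (\<forall>S\<subseteq>M. v i S \<ge> 0))"

definition feasible :: "'m set \<Rightarrow> nat set \<Rightarrow> (nat \<Rightarrow> 'm set) \<Rightarrow> bool" where
  "feasible M S a \<longleftrightarrow> (\<forall>i\<in>S. a i \<subseteq> M) \<and> (\<forall>i\<in>S. \<forall>j\<in>S. i \<noteq> j \<longrightarrow> a i \<inter> a j = {})"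

definition wval :: "'m set \<Rightarrow> (nat \<Rightarrow> 'm set \<Rightarrow> real) \<Rightarrow> nat set \<Rightarrow> real" where
  "wval M v S = Max {(\<Sum>i\<in>S. v i (a i)) | a. feasible M S a}"

definition opt_alloc :: "nat \<Rightarrow> 'm set \<Rightarrow> (nat \<Rightarrow> 'm set \<Rightarrow> real) \<Rightarrow> (nat \<Rightarrow> 'm set) \<Rightarrow> bool" where
  "opt_alloc n M v a \<longleftrightarrow> feasible M (bidders n) a \<and>
     (\<Sum>i\<in>bidders n. v i (a i)) = wval M v (bidders n)"

definition winners :: "nat \<Rightarrow> (nat \<Rightarrow> 'm set) \<Rightarrow> nat set" where
  "winners n a = {i\<in>bidders n. a i \<noteq> {}}"

definition core :: "nat \<Rightarrow> 'm set \<Rightarrow> (nat \<Rightarrow> 'm set \<Rightarrow> real) \<Rightarrow> (nat \<Rightarrow> real) set" where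
  "core n M v = {\<pi>. (\<forall>i. i \<notin> bidders n \<longrightarrow> \<pi> i = 0) \<and>
       (\<forall>i\<in>bidders n. \<pi> i \<ge> 0) \<and>
       (\<forall>S\<subseteq>bidders n. (\<Sum>i\<in>bidders n - S. \<pi> i) \<le> wval M v (bidders n) - wval M v S)}"

definition is_MRC :: "nat \<Rightarrow> 'm set \<Rightarrow> (nat \<Rightarrow> 'm set \<Rightarrow> real) \<Rightarrow> (nat \<Rightarrow> real) \<Rightarrow> bool" where
  "is_MRC n M v \<pi> \<longleftrightarrow> \<pi> \<in> core n M v \<and>
     (\<forall>\<pi>'\<in>core n M v. (\<Sum>i\<in>bidders n. \<pi>' i) \<le> (\<Sum>i\<in>bidders n. \<pi> i))"

definition sorted_entries :: "nat \<Rightarrow> (nat \<Rightarrow> real) \<Rightarrow> real list" where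
  "sorted_entries n x = sort (map x [1..<n+1])"

definition leximin_dominates :: "nat \<Rightarrow> (nat \<Rightarrow> real) \<Rightarrow> (nat \<Rightarrow> real) \<Rightarrow> bool" where
  "leximin_dominates n x y \<longleftrightarrow>
     (\<exists>k<n. (\<forall>j<k. sorted_entries n x ! j = sorted_entries n y ! j) \<and>
            sorted_entries n x ! k > sorted_entries n y ! k)"

definition is_BLO :: "nat \<Rightarrow> 'm set \<Rightarrow> (nat \<Rightarrow> 'm set \<Rightarrow> real) \<Rightarrow> (nat \<Rightarrow> real) \<Rightarrow> bool" where
  "is_BLO n M v \<pi> \<longleftrightarrow> \<pi> \<in> core n M v \<and>
     \<not> (\<exists>\<pi>'\<in>core n M v. leximin_dominates n \<pi>' \<pi>)"

definition blo_factor :: "nat \<Rightarrow> real" where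
  "blo_factor k = 4 / (real k + 2 + real (k mod 2) / real k)"

end

theory Submission
  imports Defs "HOL-Library.FuncSet" "HOL-Library.Multiset"
begin

text \<open>
  For every winner \<open>j\<close> the BLO outcome \<open>x\<close> has a tight coalition constraint whose
  blocked bidders are all paid at most \<open>x j\<close>; otherwise \<open>j\<close> could be paid a little more at the
  expense of the richer bidders, staying in the core and improving \<open>x\<close> in the leximin order.
  Among these sets one selects representatives \<open>J\<close>, each topping its own set \<open>f j\<close> and
  lying in no other one. A core vector \<open>\<pi>\<close> pays at most \<open>x\<close> on tight sets, so \<open>\<pi>(W)\<close> is
  at most the sum over \<open>j \<in> J\<close> of \<open>x j\<close> plus \<open>min (x i) (x j)\<close> for the winners
  \<open>i \<notin> J\<close>. With \<open>p = |J|\<close> and \<open>q = |W| - p\<close> this gives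
  \<open>|W| \<pi>(W) \<le> p (q + 1) x(W)\<close>, and \<open>4 p (q + 1) \<le> |W|\<^sup>2 + 2 |W| + |W| mod 2\<close>, with
  equality for \<open>p = \<lfloor>(|W| + 1) / 2\<rfloor>\<close>; the example at the end realizes this case.
\<close>

section \<open>Coalitional values and the core\<close>

lemma finite_bidders [simp]: "finite (bidders n)"
  unfolding bidders_def by simp

lemma finite_allocation_values:
  assumes "finite S" "finite M"
  shows "finite {(\<Sum>i\<in>S. v i (a i)) | a. feasible M S a}"
proof -
  have "{(\<Sum>i\<in>S. v i (a i)) | a. feasible M S a} \<subseteq> (\<lambda>a. \<Sum>i\<in>S. v i (a i)) ` (S \<rightarrow>\<^sub>E Pow M)"
  proof
    fix z assume "z \<in> {(\<Sum>i\<in>S. v i (a i)) | a. feasible M S a}"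
    then obtain a where a: "feasible M S a" "z = (\<Sum>i\<in>S. v i (a i))" by blast
    then have "restrict a S \<in> S \<rightarrow>\<^sub>E Pow M" "z = (\<Sum>i\<in>S. v i (restrict a S i))"
      unfolding feasible_def by auto
    then show "z \<in> (\<lambda>a. \<Sum>i\<in>S. v i (a i)) ` (S \<rightarrow>\<^sub>E Pow M)" by blast
  qed
  moreover have "finite (S \<rightarrow>\<^sub>E Pow M)" using assms by (simp add: finite_PiE)
  ultimately show ?thesis by (meson finite_imageI finite_subset)
qed

lemma allocation_value_le_wval:
  assumes "finite S" "finite M" "feasible M S a"
  shows "(\<Sum>i\<in>S. v i (a i)) \<le> wval M v S"
  unfolding wval_def using finite_allocation_values[OF assms(1,2), of v] assms(3)
  by (intro Max_ge) auto

lemma wval_le: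
  assumes "finite S" "finite M" "\<And>a. feasible M S a \<Longrightarrow> (\<Sum>i\<in>S. v i (a i)) \<le> B"
  shows "wval M v S \<le> B"
proof -
  have "feasible M S (\<lambda>_. {})" unfolding feasible_def by auto
  then show ?thesis unfolding wval_def using finite_allocation_values[OF assms(1,2), of v] assms(3)
    by (subst Max_le_iff) auto
qed

text \<open>Weak duality for winner determination.\<close>
lemma allocation_value_le_prices:
  fixes u :: "nat \<Rightarrow> real" and p :: "'m \<Rightarrow> real"
  assumes "finite S" "finite M" "feasible M S a"
    and "\<And>i. i \<in> S \<Longrightarrow> v i (a i) \<le> u i + sum p (a i)"
    and "\<And>t. t \<in> M \<Longrightarrow> 0 \<le> p t"
  shows "(\<Sum>i\<in>S. v i (a i)) \<le> sum u S + sum p M"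
proof -
  have sub: "\<And>i. i \<in> S \<Longrightarrow> a i \<subseteq> M" using assms(3) unfolding feasible_def by blast
  then have fin: "\<And>i. i \<in> S \<Longrightarrow> finite (a i)" using assms(2) by (meson finite_subset)
  have "(\<Sum>i\<in>S. v i (a i)) \<le> (\<Sum>i\<in>S. u i + sum p (a i))" by (rule sum_mono) (rule assms(4))
  moreover have "(\<Sum>i\<in>S. sum p (a i)) = sum p (\<Union>(a ` S))"
    using assms(1,3) fin by (intro sum.UNION_disjoint[symmetric]) (auto simp: feasible_def)
  moreover have "sum p (\<Union>(a ` S)) \<le> sum p M"
    using assms(2,5) sub by (intro sum_mono2) auto
  ultimately show ?thesis by (simp add: sum.distrib)
qed

lemma core_payment_eq_0_if_value_0:
  assumes "is_CA n M v" "opt_alloc n M v a" "\<pi> \<in> core n M v" "i \<in> bidders n" "v i (a i) = 0"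
  shows "\<pi> i = 0"
proof -
  let ?N = "bidders n"
  have "finite M" using assms(1) unfolding is_CA_def by simp
  moreover have "feasible M (?N - {i}) a" using assms(2) unfolding opt_alloc_def feasible_def by auto
  ultimately have "(\<Sum>j\<in>?N - {i}. v j (a j)) \<le> wval M v (?N - {i})"
    by (intro allocation_value_le_wval) auto
  moreover have "wval M v ?N = v i (a i) + (\<Sum>j\<in>?N - {i}. v j (a j))"
    using assms(2,4) unfolding opt_alloc_def by (simp add: sum.remove)
  moreover have "(\<Sum>j\<in>?N - (?N - {i}). \<pi> j) \<le> wval M v ?N - wval M v (?N - {i})"
    using assms(3) unfolding core_def by blast
  moreover have "?N - (?N - {i}) = {i}" using assms(4) by auto
  moreover have "\<pi> i \<ge> 0" using assms(3,4) unfolding core_def by blast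
  ultimately show ?thesis using assms(5) by simp
qed

section \<open>Sorted payment vectors\<close>

lemma length_sorted_entries [simp]: "length (sorted_entries n x) = n"
  unfolding sorted_entries_def by simp

lemma sorted_sorted_entries [simp]: "sorted (sorted_entries n x)"
  unfolding sorted_entries_def by simp

lemma set_sorted_entries: "set (sorted_entries n x) = x ` bidders n"
  unfolding sorted_entries_def bidders_def by auto

lemma length_filter_sorted_entries:
  "length (filter P (sorted_entries n x)) = card {i \<in> bidders n. P (x i)}"
proof -
  have "length (filter P (sorted_entries n x)) = length (filter (P \<circ> x) [1..<n+1])"
    unfolding sorted_entries_def by (metis filter_map length_map mset_filter mset_sort size_mset)
  also have "\<dots> = card ({i. P (x i)} \<inter> set [1..<n+1])"
    by (simp add: distinct_length_filter)
  also have "{i. P (x i)} \<inter> set [1..<n+1] = {i \<in> bidders n. P (x i)}"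
    unfolding bidders_def by auto
  finally show ?thesis .
qed

lemma sorted_nth_le_if_count:
  fixes L :: "'a::linorder list"
  assumes "sorted L" "c < length (filter (\<lambda>z. z \<le> s) L)"
  shows "L ! c \<le> s"
proof (rule ccontr)
  assume "\<not> L ! c \<le> s"
  then have "\<forall>i. c \<le> i \<and> i < length L \<longrightarrow> \<not> L ! i \<le> s"
    using assms(1) by (meson order_trans sorted_nth_mono)
  then have "{i. i < length L \<and> L ! i \<le> s} \<subseteq> {..<c}"
    by (auto simp: not_le[symmetric] intro: ccontr)
  then have "card {i. i < length L \<and> L ! i \<le> s} \<le> c"
    by (metis card_lessThan card_mono finite_lessThan)
  then show False using assms(2) by (simp add: length_filter_conv_card)
qed

lemma sorted_nth_less_if_count:
  fixes L :: "'a::linorder list"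
  assumes "sorted L" "c < length (filter (\<lambda>z. z < s) L)"
  shows "L ! c < s"
proof (rule ccontr)
  assume "\<not> L ! c < s"
  then have "\<forall>i. c \<le> i \<and> i < length L \<longrightarrow> \<not> L ! i < s"
    using assms(1) by (meson order_less_le_trans sorted_nth_mono not_less)
  then have "{i. i < length L \<and> L ! i < s} \<subseteq> {..<c}"
    by (auto simp: not_le[symmetric] intro: ccontr)
  then have "card {i. i < length L \<and> L ! i < s} \<le> c"
    by (metis card_lessThan card_mono finite_lessThan)
  then show False using assms(2) by (simp add: length_filter_conv_card)
qed

lemma sorted_nth_ge_if_count:
  fixes L :: "'a::linorder list"
  assumes "sorted L" "c < length L" "length (filter (\<lambda>z. z < s) L) \<le> c"
  shows "s \<le> L ! c"
proof (rule ccontr)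
  assume "\<not> s \<le> L ! c"
  then have "{..c} \<subseteq> {i. i < length L \<and> L ! i < s}"
    using assms(1,2) by (auto simp: not_le dest: sorted_nth_mono[of L] intro: le_less_trans)
  then have "card {..c} \<le> card {i. i < length L \<and> L ! i < s}"
    by (intro card_mono) auto
  then show False using assms(3) by (simp add: length_filter_conv_card)
qed

lemma sort_append_if_le:
  fixes A B :: "'a::linorder list"
  assumes "mset L = mset A + mset B" "\<forall>a\<in>set A. \<forall>b\<in>set B. a \<le> b"
  shows "sort L = sort A @ sort B"
  by (rule properties_for_sort) (use assms in \<open>auto simp: sorted_append\<close>)

text \<open>Both sorted vectors begin with the kept entries; right after them \<open>x\<close> has an entry
  \<open>\<le> x j\<close>, while every remaining entry of \<open>y\<close> exceeds \<open>x j\<close>.\<close>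
lemma leximin_dominates_if_raised:
  fixes x y :: "nat \<Rightarrow> real"
  assumes j: "j \<in> bidders n"
    and low: "\<And>i. i \<in> bidders n \<Longrightarrow> i \<noteq> j \<Longrightarrow> x i \<le> x j \<Longrightarrow> y i = x i"
    and high: "\<And>i. i \<in> bidders n \<Longrightarrow> i = j \<or> x j < x i \<Longrightarrow> x j < y i"
  shows "leximin_dominates n y x"
proof -
  define idx where "idx = [1..<n+1]"
  define P where "P = (\<lambda>i. i \<noteq> j \<and> x i \<le> x j)"
  define A where "A = map x (filter P idx)"
  define Bx where "Bx = map x (filter (Not \<circ> P) idx)"
  define By where "By = map y (filter (Not \<circ> P) idx)"
  have set_idx: "set idx = bidders n" unfolding idx_def bidders_def by auto
  have split: "mset (map f idx) = mset (map f (filter P idx)) + mset (map f (filter (Not \<circ> P) idx))"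
    for f :: "nat \<Rightarrow> real"
    by (induction idx) auto
  have "map y (filter P idx) = A"
    unfolding A_def using low set_idx by (auto simp: P_def)
  then have y_split: "mset (map y idx) = mset A + mset By"
    unfolding By_def using split[of y] by simp
  have By_gt: "x j < b" if "b \<in> set By" for b
    using that high set_idx unfolding By_def P_def by (auto simp: not_le)
  have sx: "sorted_entries n x = sort A @ sort Bx"
    unfolding sorted_entries_def idx_def[symmetric]
    by (rule sort_append_if_le[OF split[of x, folded A_def Bx_def]]) (auto simp: A_def Bx_def P_def)
  have sy: "sorted_entries n y = sort A @ sort By"
    unfolding sorted_entries_def idx_def[symmetric]
    by (rule sort_append_if_le[OF y_split]) (auto simp: A_def P_def dest!: By_gt)
  have j_B: "j \<in> set (filter (Not \<circ> P) idx)" using j set_idx by (simp add: P_def)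
  then have "Bx \<noteq> []" "By \<noteq> []" unfolding Bx_def By_def by (metis list.map_disc_iff empty_iff list.set(1))+
  have "length A < n"
    using \<open>Bx \<noteq> []\<close> arg_cong[OF sx, of length] by simp
  moreover have "sorted_entries n x ! length A \<le> x j"
  proof -
    have "x j \<in> set (sort Bx)" using j_B unfolding Bx_def by simp
    then obtain t where "t < length Bx" "sort Bx ! t = x j" by (metis in_set_conv_nth length_sort)
    moreover have "sort Bx ! 0 \<le> sort Bx ! t"
      using \<open>t < length Bx\<close> by (intro sorted_nth_mono) auto
    ultimately show ?thesis unfolding sx by (simp add: nth_append)
  qed
  moreover have "x j < sorted_entries n y ! length A"
  proof -
    have "sort By ! 0 \<in> set By" using \<open>By \<noteq> []\<close> by (metis length_greater_0_conv length_sort nth_mem set_sort)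
    then show ?thesis unfolding sy by (simp add: nth_append By_gt)
  qed
  ultimately show ?thesis
    unfolding leximin_dominates_def using sx sy by (intro exI[of _ "length A"]) (auto simp: nth_append)
qed

section \<open>Tight coalitions of the BLO outcome\<close>

lemma core_shift_mem:
  fixes x :: "nat \<Rightarrow> real" and \<epsilon> :: real and j n :: nat
  defines "G \<equiv> {l \<in> bidders n. x j < x l}"
  assumes x: "x \<in> core n M v" and j: "j \<in> bidders n" and "0 \<le> \<epsilon>"
    and G_ge: "\<And>l. l \<in> G \<Longrightarrow> \<epsilon> \<le> x l"
    and slack: "\<And>S. S \<subseteq> bidders n \<Longrightarrow> j \<notin> S \<Longrightarrow> (bidders n - S) \<inter> G = {} \<Longrightarrow>
            (\<Sum>i\<in>bidders n - S. x i) + \<epsilon> \<le> wval M v (bidders n) - wval M v S"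
  shows "(\<lambda>i. x i + (if i = j then \<epsilon> else 0) - (if i \<in> G then \<epsilon> else 0)) \<in> core n M v"
    (is "?y \<in> _")
proof -
  let ?N = "bidders n"
  have jG: "j \<notin> G" unfolding G_def by simp
  have sum_y: "(\<Sum>i\<in>A. ?y i) = (\<Sum>i\<in>A. x i) + (if j \<in> A then \<epsilon> else 0) - \<epsilon> * card (A \<inter> G)"
    if "finite A" for A
    using that by (simp add: sum.distrib sum_subtractf sum.delta sum.inter_restrict[symmetric])
  have "(\<Sum>i\<in>?N - S. ?y i) \<le> wval M v ?N - wval M v S" if S: "S \<subseteq> ?N" for S
  proof -
    have core_S: "(\<Sum>i\<in>?N - S. x i) \<le> wval M v ?N - wval M v S"
      using x S unfolding core_def by blast
    consider "j \<in> S" | "j \<notin> S" "(?N - S) \<inter> G = {}" | "j \<notin> S" "(?N - S) \<inter> G \<noteq> {}"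
      by blast
    then show ?thesis
    proof cases
      case 1
      moreover have "0 \<le> \<epsilon> * card ((?N - S) \<inter> G)" using \<open>0 \<le> \<epsilon>\<close> by simp
      ultimately show ?thesis using sum_y[of "?N - S"] core_S by simp
    next
      case 2
      then show ?thesis using sum_y[of "?N - S"] slack[OF S] j by simp
    next
      case 3
      then have "1 \<le> card ((?N - S) \<inter> G)" by (simp add: Suc_le_eq card_gt_0_iff)
      then have "\<epsilon> \<le> \<epsilon> * card ((?N - S) \<inter> G)"
        using \<open>0 \<le> \<epsilon>\<close> mult_left_mono[of 1 _ \<epsilon>] by simp
      then show ?thesis using sum_y[of "?N - S"] core_S 3 j by simp
    qed
  qed
  moreover have "0 \<le> ?y i" if "i \<in> ?N" for i
    using x that G_ge jG \<open>0 \<le> \<epsilon>\<close> unfolding core_def by (cases "i \<in> G") auto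
  moreover have "?y i = 0" if "i \<notin> ?N" for i
    using x that j unfolding core_def G_def by auto
  ultimately show ?thesis unfolding core_def by blast
qed

text \<open>Otherwise bidder \<open>j\<close> could be paid slightly more at the expense of the bidders above
  \<open>x j\<close>, which stays in the core (\<open>core_shift_mem\<close>) and improves \<open>x\<close> in the leximin order.\<close>
lemma BLO_tight_coalition:
  assumes BLO: "is_BLO n M v x" and j: "j \<in> bidders n"
  shows "\<exists>S\<subseteq>bidders n. j \<notin> S \<and>
    (\<Sum>i\<in>bidders n - S. x i) = wval M v (bidders n) - wval M v S \<and>
    (\<forall>l\<in>bidders n - S. x l \<le> x j)"
proof (rule ccontr)
  assume no_tight: "\<not> ?thesis"
  let ?N = "bidders n"
  let ?slack = "\<lambda>S. wval M v ?N - wval M v S - (\<Sum>i\<in>?N - S. x i)"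
  define G where "G = {l \<in> ?N. x j < x l}"
  define \<Sigma> where "\<Sigma> = {S. S \<subseteq> ?N \<and> j \<notin> S \<and> (?N - S) \<inter> G = {}}"
  define \<epsilon> where "\<epsilon> = Min (insert 1 (?slack ` \<Sigma> \<union> (\<lambda>l. (x l - x j) / 2) ` G))"
  have x: "x \<in> core n M v" using BLO unfolding is_BLO_def by simp
  have x_nonneg: "0 \<le> x i" if "i \<in> ?N" for i using x that unfolding core_def by blast
  have slack_pos: "0 < ?slack S" if "S \<in> \<Sigma>" for S
  proof -
    have "?slack S \<ge> 0" using x that unfolding core_def \<Sigma>_def by auto
    moreover have "?slack S \<noteq> 0"
    proof
      assume "?slack S = 0"
      then have "(\<Sum>i\<in>?N - S. x i) = wval M v ?N - wval M v S" by simp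
      moreover have "\<forall>l\<in>?N - S. x l \<le> x j"
        using \<open>S \<in> \<Sigma>\<close> unfolding \<Sigma>_def G_def by (auto simp: not_less)
      ultimately show False using no_tight \<open>S \<in> \<Sigma>\<close> unfolding \<Sigma>_def by blast
    qed
    ultimately show ?thesis by simp
  qed
  have fin: "finite \<Sigma>" "finite G"
    unfolding \<Sigma>_def G_def by (auto intro: finite_subset[of _ "Pow ?N"])
  have \<epsilon>_pos: "0 < \<epsilon>"
    unfolding \<epsilon>_def using fin slack_pos by (subst Min_gr_iff) (auto simp: G_def)
  have \<epsilon>_slack: "\<epsilon> \<le> ?slack S" if "S \<in> \<Sigma>" for S
    unfolding \<epsilon>_def using fin that by (intro Min_le) auto
  have \<epsilon>_gap: "\<epsilon> \<le> (x l - x j) / 2" if "l \<in> G" for l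
    unfolding \<epsilon>_def using fin that by (intro Min_le) auto
  define y where "y = (\<lambda>i. x i + (if i = j then \<epsilon> else 0) - (if i \<in> G then \<epsilon> else 0))"
  have "y \<in> core n M v"
    unfolding y_def G_def
  proof (rule core_shift_mem[OF x j])
    show "0 \<le> \<epsilon>" using \<epsilon>_pos by simp
    show "\<epsilon> \<le> x l" if "l \<in> {l \<in> ?N. x j < x l}" for l
      using \<epsilon>_gap[of l] x_nonneg[of j] j that unfolding G_def by simp
    show "(\<Sum>i\<in>?N - S. x i) + \<epsilon> \<le> wval M v ?N - wval M v S"
      if "S \<subseteq> ?N" "j \<notin> S" "(?N - S) \<inter> {l \<in> ?N. x j < x l} = {}" for S
      using \<epsilon>_slack[of S] that unfolding \<Sigma>_def G_def by simp
  qed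
  moreover have "leximin_dominates n y x"
  proof (rule leximin_dominates_if_raised[OF j])
    show "y i = x i" if "i \<noteq> j" "x i \<le> x j" for i
      using that unfolding y_def G_def by simp
    show "x j < y i" if "i \<in> ?N" "i = j \<or> x j < x i" for i
      using that \<epsilon>_pos \<epsilon>_gap[of i] unfolding y_def G_def by auto
  qed
  ultimately show False using BLO unfolding is_BLO_def by blast
qed

section \<open>Independent covers\<close>

definition independent_cover ::
    "('a \<Rightarrow> 'b::linorder) \<Rightarrow> 'a set set \<Rightarrow> 'a set \<Rightarrow> 'a set \<Rightarrow> ('a \<Rightarrow> 'a set) \<Rightarrow> bool" where
  "independent_cover x \<T> U J f \<longleftrightarrow> J \<subseteq> U \<and> U \<subseteq> (\<Union>j\<in>J. f j) \<and>
     (\<forall>j\<in>J. f j \<in> \<T> \<and> j \<in> f j \<and> (\<forall>l\<in>f j. x l \<le> x j)) \<and>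
     (\<forall>j\<in>J. \<forall>j'\<in>J. j \<noteq> j' \<longrightarrow> j' \<notin> f j)"

lemma minimal_cover_private_point:
  assumes "E \<subseteq> \<Union>\<C>" "\<forall>\<C>'\<subset>\<C>. \<not> E \<subseteq> \<Union>\<C>'" "C \<in> \<C>"
  shows "\<exists>p. p \<in> E \<inter> C \<and> (\<forall>C'\<in>\<C> - {C}. p \<notin> C')"
proof (rule ccontr)
  assume "\<not> ?thesis"
  then have "E \<subseteq> \<Union>(\<C> - {C})" using assms(1) by blast
  then show False using assms(2) assms(3) by blast
qed

text \<open>Ties at the top value are resolved by a minimal subcover, each member of which has a
  point of its own.\<close>
lemma independent_cover_top_level:
  assumes "finite \<T>"
    and top: "\<And>e. e \<in> E \<Longrightarrow> x e = \<theta>"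
    and good: "\<And>e. e \<in> E \<Longrightarrow> \<exists>T\<in>\<T>. e \<in> T \<and> (\<forall>l\<in>T. x l \<le> x e)"
  shows "\<exists>J f. independent_cover x \<T> E J f"
proof -
  define \<C>\<^sub>0 where "\<C>\<^sub>0 = {T \<in> \<T>. \<forall>l\<in>T. x l \<le> \<theta>}"
  define covers where "covers = (\<lambda>\<C>. \<C> \<subseteq> \<C>\<^sub>0 \<and> E \<subseteq> \<Union>\<C>)"
  have "E \<subseteq> \<Union>\<C>\<^sub>0"
  proof
    fix e assume "e \<in> E"
    then obtain T where "T \<in> \<T>" "e \<in> T" "\<forall>l\<in>T. x l \<le> x e" using good by blast
    then show "e \<in> \<Union>\<C>\<^sub>0" using top[OF \<open>e \<in> E\<close>] unfolding \<C>\<^sub>0_def by blast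
  qed
  then have "covers \<C>\<^sub>0" unfolding covers_def by blast
  then obtain \<C> where \<C>: "covers \<C>" and least: "\<And>\<C>'. covers \<C>' \<Longrightarrow> card \<C> \<le> card \<C>'"
    using ex_has_least_nat[of covers \<C>\<^sub>0 card] by blast
  have "\<C> \<subseteq> \<T>" using \<C> unfolding covers_def \<C>\<^sub>0_def by blast
  then have fin: "finite \<C>" using \<open>finite \<T>\<close> by (rule finite_subset)
  have minimal: "\<forall>\<C>'\<subset>\<C>. \<not> E \<subseteq> \<Union>\<C>'"
  proof (intro allI impI)
    fix \<C>' assume "\<C>' \<subset> \<C>"
    then have "\<not> card \<C> \<le> card \<C>'" using psubset_card_mono[OF fin] by (simp add: not_le)
    then show "\<not> E \<subseteq> \<Union>\<C>'" using least[of \<C>'] \<open>\<C>' \<subset> \<C>\<close> \<C> unfolding covers_def by blast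
  qed
  have "E \<subseteq> \<Union>\<C>" using \<C> unfolding covers_def by simp
  then have "\<forall>C\<in>\<C>. \<exists>p. p \<in> E \<inter> C \<and> (\<forall>C'\<in>\<C> - {C}. p \<notin> C')"
    using minimal_cover_private_point minimal by blast
  then obtain rep where "\<forall>C\<in>\<C>. rep C \<in> E \<inter> C \<and> (\<forall>C'\<in>\<C> - {C}. rep C \<notin> C')"
    by (rule bchoice[elim_format]) blast
  then have rep: "\<And>C. C \<in> \<C> \<Longrightarrow> rep C \<in> E \<inter> C \<and> (\<forall>C'\<in>\<C> - {C}. rep C \<notin> C')"
    by blast
  have inj: "inj_on rep \<C>"
  proof (rule inj_onI)
    fix C C' assume "C \<in> \<C>" "C' \<in> \<C>" "rep C = rep C'"
    then show "C = C'" using rep[of C] rep[of C'] by auto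
  qed
  have "independent_cover x \<T> E (rep ` \<C>) (inv_into \<C> rep)"
    unfolding independent_cover_def
  proof (intro conjI ballI impI)
    show "rep ` \<C> \<subseteq> E" using rep by blast
    show "E \<subseteq> (\<Union>j\<in>rep ` \<C>. inv_into \<C> rep j)"
      using \<C> inv_into_image_cancel[OF inj subset_refl] unfolding covers_def by simp
  next
    fix j assume "j \<in> rep ` \<C>"
    then obtain C where C: "C \<in> \<C>" "j = rep C" by blast
    then have "inv_into \<C> rep j = C" using inj by simp
    moreover have "C \<in> \<C>\<^sub>0" using \<C> C(1) unfolding covers_def by blast
    moreover have "x j = \<theta>" using rep[OF C(1)] C(2) top by blast
    ultimately show "inv_into \<C> rep j \<in> \<T>" "j \<in> inv_into \<C> rep j"
      "\<And>l. l \<in> inv_into \<C> rep j \<Longrightarrow> x l \<le> x j"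
      using C rep[OF C(1)] unfolding \<C>\<^sub>0_def by auto
    fix j' assume "j' \<in> rep ` \<C>" "j \<noteq> j'"
    then show "j' \<notin> inv_into \<C> rep j"
      using C \<open>inv_into \<C> rep j = C\<close> rep by blast
  qed
  then show ?thesis by blast
qed

lemma independent_cover_combine:
  assumes top: "independent_cover x \<T> E J\<^sub>1 f\<^sub>1" and rest: "independent_cover x \<T> U' J\<^sub>2 f\<^sub>2"
    and "E \<subseteq> U" and U': "U' = U - (\<Union>j\<in>J\<^sub>1. f\<^sub>1 j)"
    and below: "\<And>i j. i \<in> J\<^sub>1 \<Longrightarrow> j \<in> J\<^sub>2 \<Longrightarrow> x j < x i"
  shows "independent_cover x \<T> U (J\<^sub>1 \<union> J\<^sub>2) (\<lambda>j. if j \<in> J\<^sub>1 then f\<^sub>1 j else f\<^sub>2 j)"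
    (is "independent_cover x \<T> U _ ?f")
proof -
  have J\<^sub>1: "J\<^sub>1 \<subseteq> E" "\<forall>j\<in>J\<^sub>1. f\<^sub>1 j \<in> \<T> \<and> j \<in> f\<^sub>1 j \<and> (\<forall>l\<in>f\<^sub>1 j. x l \<le> x j)"
    "\<forall>j\<in>J\<^sub>1. \<forall>j'\<in>J\<^sub>1. j \<noteq> j' \<longrightarrow> j' \<notin> f\<^sub>1 j"
    using top unfolding independent_cover_def by auto
  have J\<^sub>2: "J\<^sub>2 \<subseteq> U'" "U' \<subseteq> (\<Union>j\<in>J\<^sub>2. f\<^sub>2 j)"
    "\<forall>j\<in>J\<^sub>2. f\<^sub>2 j \<in> \<T> \<and> j \<in> f\<^sub>2 j \<and> (\<forall>l\<in>f\<^sub>2 j. x l \<le> x j)"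
    "\<forall>j\<in>J\<^sub>2. \<forall>j'\<in>J\<^sub>2. j \<noteq> j' \<longrightarrow> j' \<notin> f\<^sub>2 j"
    using rest unfolding independent_cover_def by auto
  have disj: "j \<notin> J\<^sub>1" if "j \<in> J\<^sub>2" for j
    using J\<^sub>1(2) J\<^sub>2(1) U' that by blast
  show ?thesis
    unfolding independent_cover_def
  proof (intro conjI ballI impI)
    show "J\<^sub>1 \<union> J\<^sub>2 \<subseteq> U" using J\<^sub>1(1) J\<^sub>2(1) \<open>E \<subseteq> U\<close> U' by blast
    show "U \<subseteq> (\<Union>j\<in>J\<^sub>1 \<union> J\<^sub>2. ?f j)"
    proof
      fix u assume "u \<in> U"
      show "u \<in> (\<Union>j\<in>J\<^sub>1 \<union> J\<^sub>2. ?f j)"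
      proof (cases "u \<in> (\<Union>j\<in>J\<^sub>1. f\<^sub>1 j)")
        case True
        then show ?thesis by auto
      next
        case False
        then obtain j where "j \<in> J\<^sub>2" "u \<in> f\<^sub>2 j" using J\<^sub>2(2) U' \<open>u \<in> U\<close> by blast
        then show ?thesis using disj by (intro UN_I[of j]) auto
      qed
    qed
  next
    fix j assume "j \<in> J\<^sub>1 \<union> J\<^sub>2"
    then show "?f j \<in> \<T>" "j \<in> ?f j" "\<And>l. l \<in> ?f j \<Longrightarrow> x l \<le> x j"
      using J\<^sub>1(2) J\<^sub>2(3) disj by auto
    fix j' assume "j' \<in> J\<^sub>1 \<union> J\<^sub>2" "j \<noteq> j'"
    then consider "j \<in> J\<^sub>1" "j' \<in> J\<^sub>1" | "j \<in> J\<^sub>1" "j' \<in> J\<^sub>2" | "j \<in> J\<^sub>2" "j' \<in> J\<^sub>1"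
      | "j \<in> J\<^sub>2" "j' \<in> J\<^sub>2"
      using \<open>j \<in> J\<^sub>1 \<union> J\<^sub>2\<close> by blast
    then show "j' \<notin> ?f j"
    proof cases
      case 1
      then show ?thesis using J\<^sub>1(3) \<open>j \<noteq> j'\<close> by simp
    next
      case 2
      then show ?thesis using J\<^sub>2(1) U' by auto
    next
      case 3
      then show ?thesis using J\<^sub>2(3) below[of j' j] disj[of j] by (auto simp: not_le[symmetric])
    next
      case 4
      then show ?thesis using J\<^sub>2(4) \<open>j \<noteq> j'\<close> disj by simp
    qed
  qed
qed

text \<open>The bidders of maximal value are covered first; the remaining ones by induction.\<close>
lemma independent_cover_exists:
  fixes x :: "'a \<Rightarrow> 'b::linorder"
  assumes "finite \<T>" "finite U"
    and good: "\<And>u. u \<in> U \<Longrightarrow> \<exists>T\<in>\<T>. u \<in> T \<and> (\<forall>l\<in>T. x l \<le> x u)"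
  shows "\<exists>J f. independent_cover x \<T> U J f"
  using assms(2,3)
proof (induction "card U" arbitrary: U rule: less_induct)
  case less
  show ?case
  proof (cases "U = {}")
    case True
    then show ?thesis unfolding independent_cover_def by auto
  next
    case False
    define E where "E = {u \<in> U. x u = Max (x ` U)}"
    have "Max (x ` U) \<in> x ` U" using less.prems False by simp
    then have "E \<noteq> {}" unfolding E_def by auto
    have "x e = Max (x ` U)" if "e \<in> E" for e using that unfolding E_def by simp
    moreover have "\<exists>T\<in>\<T>. e \<in> T \<and> (\<forall>l\<in>T. x l \<le> x e)" if "e \<in> E" for e
      using that less.prems(2) unfolding E_def by blast
    ultimately obtain J\<^sub>1 f\<^sub>1 where top: "independent_cover x \<T> E J\<^sub>1 f\<^sub>1"
      using independent_cover_top_level[OF \<open>finite \<T>\<close>] by blast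
    define U' where "U' = U - (\<Union>j\<in>J\<^sub>1. f\<^sub>1 j)"
    have "E \<subseteq> (\<Union>j\<in>J\<^sub>1. f\<^sub>1 j)" using top unfolding independent_cover_def by blast
    then have "U' \<subset> U" using \<open>E \<noteq> {}\<close> unfolding U'_def E_def by blast
    have "\<exists>J f. independent_cover x \<T> U' J f"
    proof (rule less.hyps)
      show "card U' < card U" using psubset_card_mono[OF less.prems(1) \<open>U' \<subset> U\<close>] .
      show "finite U'" using less.prems(1) \<open>U' \<subset> U\<close> by (meson finite_subset psubset_imp_subset)
      show "\<exists>T\<in>\<T>. u \<in> T \<and> (\<forall>l\<in>T. x l \<le> x u)" if "u \<in> U'" for u
        using less.prems(2) \<open>U' \<subset> U\<close> that by blast
    qed
    then obtain J\<^sub>2 f\<^sub>2 where rest: "independent_cover x \<T> U' J\<^sub>2 f\<^sub>2" by blast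
    have below: "x j < x i" if "i \<in> J\<^sub>1" "j \<in> J\<^sub>2" for i j
    proof -
      have "i \<in> E" "j \<in> U'" using top rest that unfolding independent_cover_def by blast+
      then have "j \<in> U" "j \<notin> E" using \<open>E \<subseteq> _\<close> unfolding U'_def by blast+
      then have "x j \<le> Max (x ` U)" "x j \<noteq> Max (x ` U)"
        using less.prems(1) unfolding E_def by auto
      with \<open>i \<in> E\<close> show ?thesis unfolding E_def by simp
    qed
    have "E \<subseteq> U" unfolding E_def by blast
    from independent_cover_combine[OF top rest this U'_def below] show ?thesis by blast
  qed
qed

section \<open>The revenue bound\<close>

lemma sum_le_sum_over_cover:
  fixes \<pi> :: "'a \<Rightarrow> real"
  assumes "finite J" "\<And>j. j \<in> J \<Longrightarrow> finite (f j)"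
    and "\<And>i. i \<in> (\<Union>j\<in>J. f j) \<Longrightarrow> 0 \<le> \<pi> i" and "U \<subseteq> (\<Union>j\<in>J. f j)"
  shows "sum \<pi> U \<le> (\<Sum>j\<in>J. sum \<pi> (f j))"
proof -
  have "sum \<pi> U \<le> sum \<pi> (\<Union>j\<in>J. f j)"
    using assms by (intro sum_mono2) auto
  also have "\<dots> \<le> (\<Sum>j\<in>J. sum \<pi> (f j))"
    using assms(1-3)
  proof (induction J rule: finite_induct)
    case (insert j J)
    have "finite (\<Union>i\<in>J. f i)" "finite (f j)" using insert by auto
    moreover have "0 \<le> sum \<pi> (f j \<inter> (\<Union>i\<in>J. f i))" using insert.prems by (intro sum_nonneg) auto
    ultimately have "sum \<pi> (f j \<union> (\<Union>i\<in>J. f i)) \<le> sum \<pi> (f j) + sum \<pi> (\<Union>i\<in>J. f i)"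
      by (simp add: sum_Un)
    then show ?case using insert by simp
  qed simp
  finally show ?thesis .
qed

text \<open>Pointwise, \<open>(p + q) min a b \<le> (p - 1) b + (q + 1) a\<close> for \<open>p \<ge> 1\<close>.\<close>
lemma card_mult_sum_min_le:
  fixes x :: "'a \<Rightarrow> real"
  assumes "finite J" "finite B" "J \<noteq> {}" "\<And>i. i \<in> J \<union> B \<Longrightarrow> 0 \<le> x i"
  shows "real (card J + card B) * (\<Sum>j\<in>J. x j + (\<Sum>i\<in>B. min (x i) (x j)))
    \<le> real (card J) * (real (card B) + 1) * (sum x J + sum x B)"
proof -
  define p q where "p = real (card J)" and "q = real (card B)"
  have "1 \<le> p" using assms(1,3) unfolding p_def by (simp add: Suc_le_eq card_gt_0_iff)
  have pointwise: "(p + q) * (x j + (\<Sum>i\<in>B. min (x i) (x j)))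
      \<le> p * (q + 1) * x j + (q + 1) * sum x B" if "j \<in> J" for j
  proof -
    have "(p + q) * min (x i) (x j) \<le> (p - 1) * x j + (q + 1) * x i" if "i \<in> B" for i
    proof -
      have "(p - 1) * min (x i) (x j) \<le> (p - 1) * x j"
        using \<open>1 \<le> p\<close> by (intro mult_left_mono) auto
      moreover have "(q + 1) * min (x i) (x j) \<le> (q + 1) * x i"
        unfolding q_def by (intro mult_left_mono) auto
      ultimately show ?thesis by (simp add: algebra_simps)
    qed
    then have "(p + q) * (\<Sum>i\<in>B. min (x i) (x j)) \<le> (\<Sum>i\<in>B. (p - 1) * x j + (q + 1) * x i)"
      by (simp add: sum_distrib_left sum_mono)
    also have "\<dots> = q * (p - 1) * x j + (q + 1) * sum x B"
      unfolding q_def by (simp add: sum.distrib sum_distrib_left)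
    finally show ?thesis by (simp add: algebra_simps)
  qed
  have "(p + q) * (\<Sum>j\<in>J. x j + (\<Sum>i\<in>B. min (x i) (x j)))
      \<le> (\<Sum>j\<in>J. p * (q + 1) * x j + (q + 1) * sum x B)"
    using pointwise by (simp add: sum_distrib_left sum_mono)
  also have "\<dots> = p * (q + 1) * sum x J + p * ((q + 1) * sum x B)"
    unfolding p_def by (simp add: sum.distrib sum_distrib_left)
  finally show ?thesis unfolding p_def q_def by (simp add: algebra_simps)
qed

lemma four_mul_le_square_bound:
  fixes p k :: nat
  assumes "1 \<le> p" "p \<le> k"
  shows "4 * real p * (real (k - p) + 1) \<le> real k ^ 2 + 2 * real k + real (k mod 2)"
proof (cases "even k")
  case True
  then obtain m where k: "k = 2 * m" by blast
  have "k mod 2 = 0" using True by simp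
  have "0 \<le> (real p - real m) * (real p - real m - 1)"
    by (cases "p \<le> m") (auto intro: mult_nonpos_nonpos mult_nonneg_nonneg)
  then show ?thesis
    using assms \<open>k mod 2 = _\<close> unfolding k by (simp add: of_nat_diff algebra_simps power2_eq_square)
next
  case False
  then obtain m where k: "k = 2 * m + 1" using oddE by blast
  have "k mod 2 = 1" using False by presburger
  have "0 \<le> (real m + 1 - real p)^2" by simp
  then show ?thesis
    using assms \<open>k mod 2 = _\<close> unfolding k by (simp add: of_nat_diff algebra_simps power2_eq_square)
qed

lemma blo_factor_eq:
  assumes "1 \<le> k"
  shows "blo_factor k = 4 * real k / (real k ^ 2 + 2 * real k + real (k mod 2))"
  using assms unfolding blo_factor_def by (simp add: field_simps power2_eq_square)

lemma blo_factor_mult_sum_le_if_tight_cover: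
  fixes x \<pi> :: "'a \<Rightarrow> real"
  assumes "finite W" "W \<noteq> {}" and x_nonneg: "\<And>i. i \<in> W \<Longrightarrow> 0 \<le> x i"
    and \<pi>_nonneg: "\<And>i. i \<in> W \<Longrightarrow> 0 \<le> \<pi> i" and "\<T> \<subseteq> Pow W"
    and tight: "\<And>T. T \<in> \<T> \<Longrightarrow> sum \<pi> T \<le> sum x T"
    and good: "\<And>i. i \<in> W \<Longrightarrow> \<exists>T\<in>\<T>. i \<in> T \<and> (\<forall>l\<in>T. x l \<le> x i)"
  shows "blo_factor (card W) * sum \<pi> W \<le> sum x W"
proof -
  have "finite \<T>" using \<open>finite W\<close> \<open>\<T> \<subseteq> Pow W\<close> by (meson finite_Pow_iff finite_subset)
  then obtain J f where "independent_cover x \<T> W J f"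
    using independent_cover_exists[OF _ \<open>finite W\<close> good] by blast
  then have J: "J \<subseteq> W" "W \<subseteq> (\<Union>j\<in>J. f j)"
    and f: "\<And>j. j \<in> J \<Longrightarrow> f j \<in> \<T> \<and> j \<in> f j \<and> (\<forall>l\<in>f j. x l \<le> x j)"
    and indep: "\<And>j j'. j \<in> J \<Longrightarrow> j' \<in> J \<Longrightarrow> j \<noteq> j' \<Longrightarrow> j' \<notin> f j"
    unfolding independent_cover_def by blast+
  have f_W: "f j \<subseteq> W" if "j \<in> J" for j using f[OF that] \<open>\<T> \<subseteq> Pow W\<close> by blast
  define B where "B = W - J"
  define D where "D = real (card W) ^ 2 + 2 * real (card W) + real (card W mod 2)"
  have "finite J" using \<open>finite W\<close> J(1) by (rule rev_finite_subset)
  have "finite B" using \<open>finite W\<close> unfolding B_def by simp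
  have f_finite: "finite (f j)" if "j \<in> J" for j using \<open>finite W\<close> f_W[OF that] by (rule rev_finite_subset)
  have "J \<noteq> {}" using J(2) \<open>W \<noteq> {}\<close> by blast
  have sum_f: "sum x (f j) \<le> x j + (\<Sum>i\<in>B. min (x i) (x j))" if "j \<in> J" for j
  proof -
    have "sum x (f j) = x j + sum x (f j - {j})" using f[OF that] f_finite[OF that] by (simp add: sum.remove)
    also have "sum x (f j - {j}) = (\<Sum>i\<in>f j - {j}. min (x i) (x j))"
      using f[OF that] by (intro sum.cong) auto
    also have "\<dots> \<le> (\<Sum>i\<in>B. min (x i) (x j))"
    proof (rule sum_mono2[OF \<open>finite B\<close>])
      show "f j - {j} \<subseteq> B" using f_W[OF that] indep[OF that] unfolding B_def by blast
      show "0 \<le> min (x i) (x j)" if "i \<in> B - (f j - {j})" for i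
        using x_nonneg J(1) \<open>j \<in> J\<close> that unfolding B_def by auto
    qed
    finally show ?thesis by simp
  qed
  have "sum \<pi> W \<le> (\<Sum>j\<in>J. sum \<pi> (f j))"
    using J(2) f_W \<pi>_nonneg by (intro sum_le_sum_over_cover[OF \<open>finite J\<close> f_finite]) auto
  also have "\<dots> \<le> (\<Sum>j\<in>J. x j + (\<Sum>i\<in>B. min (x i) (x j)))"
    using tight f sum_f by (intro sum_mono) (meson order_trans)
  finally have "sum \<pi> W \<le> (\<Sum>j\<in>J. x j + (\<Sum>i\<in>B. min (x i) (x j)))" .
  moreover have "card W = card J + card B" "sum x W = sum x J + sum x B"
    using card_Diff_subset[OF \<open>finite J\<close> J(1)] card_mono[OF \<open>finite W\<close> J(1)]
      sum.subset_diff[OF J(1) \<open>finite W\<close>, of x]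
    unfolding B_def by auto
  ultimately have "real (card W) * sum \<pi> W
      \<le> real (card J + card B) * (\<Sum>j\<in>J. x j + (\<Sum>i\<in>B. min (x i) (x j)))"
    by (simp add: mult_left_mono)
  also have "\<dots> \<le> real (card J) * (real (card B) + 1) * sum x W"
    unfolding \<open>sum x W = _\<close>
    by (rule card_mult_sum_min_le[OF \<open>finite J\<close> \<open>finite B\<close> \<open>J \<noteq> {}\<close>])
      (use x_nonneg J(1) in \<open>auto simp: B_def\<close>)
  also have "\<dots> \<le> (real (card W) ^ 2 + 2 * real (card W) + real (card W mod 2)) / 4 * sum x W"
  proof (rule mult_right_mono)
    have "1 \<le> card J" "card J \<le> card W"
      using \<open>finite J\<close> \<open>J \<noteq> {}\<close> J(1) \<open>finite W\<close> by (auto simp: Suc_le_eq card_gt_0_iff card_mono)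
    from four_mul_le_square_bound[OF this] \<open>card W = card J + card B\<close>
    show "real (card J) * (real (card B) + 1) \<le> (real (card W) ^ 2 + 2 * real (card W) + real (card W mod 2)) / 4"
      by simp
    show "0 \<le> sum x W" using x_nonneg by (simp add: sum_nonneg)
  qed
  finally have bound: "real (card W) * sum \<pi> W \<le> D / 4 * sum x W"
    unfolding D_def .
  have "1 \<le> card W" using \<open>finite W\<close> \<open>W \<noteq> {}\<close> by (simp add: Suc_le_eq card_gt_0_iff)
  then have "0 < D" unfolding D_def by (simp add: add_pos_nonneg)
  have "blo_factor (card W) * sum \<pi> W = 4 * (real (card W) * sum \<pi> W) / D"
    using blo_factor_eq[OF \<open>1 \<le> card W\<close>] unfolding D_def by simp
  also have "\<dots> \<le> sum x W" using bound \<open>0 < D\<close> by (simp add: pos_divide_le_eq algebra_simps)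
  finally show ?thesis .
qed

lemma core_sum_eq_sum_winners:
  assumes "is_CA n M v" "opt_alloc n M v a" "\<pi> \<in> core n M v" "A \<subseteq> bidders n"
  shows "sum \<pi> A = sum \<pi> (A \<inter> winners n a)"
proof (rule sum.mono_neutral_right)
  show "finite A" using assms(4) by (rule finite_subset) simp
  show "\<forall>i\<in>A - A \<inter> winners n a. \<pi> i = 0"
  proof
    fix i assume i: "i \<in> A - A \<inter> winners n a"
    then have "i \<in> bidders n" "a i = {}" using assms(4) unfolding winners_def by auto
    moreover have "v i {} = 0" using assms(1) \<open>i \<in> bidders n\<close> unfolding is_CA_def by simp
    ultimately show "\<pi> i = 0" using core_payment_eq_0_if_value_0[OF assms(1-3)] by simp
  qed
qed auto

text \<open>The tight coalitions of the BLO outcome, restricted to the winners, cover every winner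
  from above, and every core vector pays at most \<open>x\<close> on each of them.\<close>
theorem BLO_revenue_ge_blo_factor_mult_core:
  assumes CA: "is_CA n M v" and opt: "opt_alloc n M v a" and "winners n a \<noteq> {}"
    and BLO: "is_BLO n M v x" and \<pi>: "\<pi> \<in> core n M v"
  shows "blo_factor (card (winners n a)) * (\<Sum>i\<in>bidders n. \<pi> i) \<le> (\<Sum>i\<in>bidders n. x i)"
proof -
  let ?N = "bidders n" and ?W = "winners n a"
  let ?tight = "\<lambda>S. S \<subseteq> ?N \<and> (\<Sum>i\<in>?N - S. x i) = wval M v ?N - wval M v S"
  have x: "x \<in> core n M v" using BLO unfolding is_BLO_def by simp
  have W_N: "?W \<subseteq> ?N" unfolding winners_def by auto
  have sum_W: "sum y (?N - S) = sum y ((?N - S) \<inter> ?W)" if "y \<in> core n M v" for y S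
    using core_sum_eq_sum_winners[OF CA opt that] by blast
  have "blo_factor (card ?W) * sum \<pi> ?W \<le> sum x ?W"
  proof (rule blo_factor_mult_sum_le_if_tight_cover)
    show "finite ?W" using W_N by (rule finite_subset) simp
    show "?W \<noteq> {}" by fact
    show "0 \<le> x i" "0 \<le> \<pi> i" if "i \<in> ?W" for i
      using x \<pi> that W_N unfolding core_def by auto
    show "{(?N - S) \<inter> ?W | S. ?tight S} \<subseteq> Pow ?W" by blast
    show "sum \<pi> T \<le> sum x T" if T: "T \<in> {(?N - S) \<inter> ?W | S. ?tight S}" for T
    proof -
      obtain S where S: "T = (?N - S) \<inter> ?W" "?tight S" using T by blast
      then have "sum \<pi> (?N - S) \<le> sum x (?N - S)" using \<pi> unfolding core_def by auto
      then show ?thesis using sum_W[OF \<pi>] sum_W[OF x] S(1) by simp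
    qed
    show "\<exists>T\<in>{(?N - S) \<inter> ?W | S. ?tight S}. i \<in> T \<and> (\<forall>l\<in>T. x l \<le> x i)" if i: "i \<in> ?W" for i
    proof -
      have "i \<in> ?N" using i W_N by blast
      obtain S where S: "S \<subseteq> ?N" "i \<notin> S"
        "(\<Sum>l\<in>?N - S. x l) = wval M v ?N - wval M v S" "\<forall>l\<in>?N - S. x l \<le> x i"
        using BLO_tight_coalition[OF BLO \<open>i \<in> ?N\<close>] by blast
      have "(?N - S) \<inter> ?W \<in> {(?N - S) \<inter> ?W | S. ?tight S}" using S(1,3) by blast
      moreover have "i \<in> (?N - S) \<inter> ?W" using i S(2) W_N by blast
      moreover have "\<forall>l\<in>(?N - S) \<inter> ?W. x l \<le> x i" using S(4) by blast
      ultimately show ?thesis by blast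
    qed
  qed
  moreover have "sum y ?N = sum y ?W" if "y \<in> core n M v" for y
    using core_sum_eq_sum_winners[OF CA opt that, of ?N] W_N by (simp add: Int_absorb1)
  ultimately show ?thesis using x \<pi> by simp
qed

section \<open>The tight example\<close>

text \<open>The extremal auction with \<open>k\<close> winners and \<open>h = \<lfloor>(k - 1) / 2\<rfloor>\<close>: the items are
  \<open>1..k\<close>, winner \<open>i \<le> k\<close> wants item \<open>i\<close> at value 1, and for each \<open>b \<in> {h + 1..k}\<close> the
  losing bidder \<open>k + b\<close> bids \<open>h\<close> for the package \<open>{1..h} \<union> {b}\<close>. The BLO outcome spreads
  the constraints of these packages evenly over the winners, whereas the revenue maximum charges
  only the winners \<open>h + 1..k\<close>.\<close>
definition tight_h :: "nat \<Rightarrow> nat" where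
  "tight_h k = (k - 1) div 2"

definition tight_valuation :: "nat \<Rightarrow> nat \<Rightarrow> nat set \<Rightarrow> real" where
  "tight_valuation k i A =
     (if i \<in> {1..k} then (if i \<in> A then 1 else 0)
      else if i - k \<in> {tight_h k + 1..k} \<and> {1..tight_h k} \<union> {i - k} \<subseteq> A
      then real (tight_h k) else 0)"

definition tight_allocation :: "nat \<Rightarrow> nat \<Rightarrow> nat set" where
  "tight_allocation k i = (if i \<in> {1..k} then {i} else {})"

definition tight_BLO :: "nat \<Rightarrow> nat \<Rightarrow> real" where
  "tight_BLO k i = (if i \<in> {1..k} then 1 / real (tight_h k + 1) else 0)"

definition tight_MRC :: "nat \<Rightarrow> nat \<Rightarrow> real" where
  "tight_MRC k i = (if i \<in> {tight_h k + 1..k} then 1 else 0)"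

lemma sum_indicator_eq_card:
  assumes "finite A"
  shows "(\<Sum>i\<in>A. if i \<in> X then (c::real) else 0) = c * card (A \<inter> X)"
  using assms by (simp add: sum.inter_restrict[symmetric])

lemma four_mul_tight_h:
  assumes "1 \<le> k"
  shows "4 * real (tight_h k + 1) * real (k - tight_h k)
    = real k ^ 2 + 2 * real k + real (k mod 2)"
proof (cases "even k")
  case True
  then obtain m where m: "k = 2 * m" "1 \<le> m" using assms by auto
  then have "tight_h k = m - 1" unfolding tight_h_def by presburger
  with m show ?thesis by (simp add: of_nat_diff algebra_simps power2_eq_square)
next
  case False
  then obtain m where "k = 2 * m + 1" using oddE by blast
  moreover have "k mod 2 = 1" using False by presburger
  ultimately show ?thesis unfolding tight_h_def by (simp add: algebra_simps power2_eq_square)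
qed

lemma eq_if_sum_le_card_mult:
  fixes f :: "'a \<Rightarrow> real"
  assumes "finite T" "\<And>t. t \<in> T \<Longrightarrow> c \<le> f t" "sum f T \<le> real (card T) * c" "t \<in> T"
  shows "f t = c"
proof -
  have "(\<Sum>t\<in>T. f t - c) \<le> 0" using assms(3) by (simp add: sum_subtractf)
  moreover have nonneg: "\<forall>t\<in>T. 0 \<le> f t - c" using assms(2) by simp
  ultimately have "(\<Sum>t\<in>T. f t - c) = 0" by (meson antisym sum_nonneg)
  then show ?thesis using sum_nonneg_eq_0_iff[OF assms(1), of "\<lambda>t. f t - c"] nonneg assms(4) by simp
qed

context
  fixes k :: nat
  assumes k: "1 \<le> k"
begin

abbreviation (input) "h \<equiv> tight_h k"
abbreviation (input) "v \<equiv> tight_valuation k"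
abbreviation (input) "N \<equiv> bidders (2 * k)"
abbreviation (input) "W \<equiv> {1..k}"
abbreviation (input) "H \<equiv> {1..tight_h k}"
abbreviation (input) "B \<equiv> {tight_h k + 1..k}"

lemma tight_h_less: "h < k"
  using k unfolding tight_h_def by linarith

lemma tight_W_subset: "W \<subseteq> N"
  unfolding bidders_def by auto

text \<open>Dual certificate for the BLO outcome: utility \<open>m\<close> for each winner and price \<open>1 - m\<close>
  for each item, with \<open>m = 1 / (h + 1)\<close>; a losing package has \<open>h + 1\<close> items and
  \<open>(h + 1)(1 - m) = h\<close>.\<close>
lemma tight_wval_le_BLO:
  assumes "S \<subseteq> N"
  shows "wval W v S \<le> 1 / real (h + 1) * card (S \<inter> W) + (1 - 1 / real (h + 1)) * k"
proof (rule wval_le)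
  let ?m = "1 / real (h + 1)"
  show "finite S" using assms by (rule finite_subset) simp
  fix a assume a: "feasible W S a"
  have "(\<Sum>i\<in>S. v i (a i)) \<le> (\<Sum>i\<in>S. if i \<in> W then ?m else 0) + (\<Sum>t\<in>W. 1 - ?m)"
  proof (rule allocation_value_le_prices[OF \<open>finite S\<close> _ a])
    fix i assume "i \<in> S"
    then have "a i \<subseteq> W" using a unfolding feasible_def by blast
    then have "finite (a i)" by (rule finite_subset) simp
    have m: "0 \<le> 1 - ?m" "(1 - ?m) * real (h + 1) = h" by (auto simp: field_simps)
    show "v i (a i) \<le> (if i \<in> W then ?m else 0) + (\<Sum>t\<in>a i. 1 - ?m)"
    proof (cases "i \<in> W")
      case True
      show ?thesis
      proof (cases "i \<in> a i")
        case True
        then have "1 \<le> card (a i)" using \<open>finite (a i)\<close> by (auto simp: Suc_le_eq card_gt_0_iff)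
        then have "(1 - ?m) * 1 \<le> (1 - ?m) * card (a i)" using m(1) by (intro mult_left_mono) auto
        then show ?thesis using \<open>i \<in> W\<close> True unfolding tight_valuation_def by (simp add: algebra_simps)
      qed (use \<open>i \<in> W\<close> m in \<open>simp add: tight_valuation_def\<close>)
    next
      case False
      show ?thesis
      proof (cases "i - k \<in> B \<and> H \<union> {i - k} \<subseteq> a i")
        case True
        then have "card (H \<union> {i - k}) \<le> card (a i)" using \<open>finite (a i)\<close> by (intro card_mono) auto
        moreover have "card (H \<union> {i - k}) = h + 1" using True by simp
        ultimately have "(1 - ?m) * real (h + 1) \<le> (1 - ?m) * card (a i)"
          using m(1) by (intro mult_left_mono) auto
        moreover have "v i (a i) = h"
          unfolding tight_valuation_def by (simp only: if_not_P[OF False] if_P[OF True])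
        ultimately show ?thesis unfolding if_not_P[OF False] using m(2) by (simp add: mult.commute)
      next
        case False
        then have "v i (a i) = 0"
          unfolding tight_valuation_def if_not_P[OF \<open>i \<notin> W\<close>] if_not_P[OF False] by simp
        then show ?thesis unfolding if_not_P[OF \<open>i \<notin> W\<close>] using m(1) by simp
      qed
    qed
  qed (auto simp: field_simps)
  also have "\<dots> = ?m * card (S \<inter> W) + (1 - ?m) * k"
    using sum_indicator_eq_card[OF \<open>finite S\<close>, of W ?m] by simp
  finally show "(\<Sum>i\<in>S. v i (a i)) \<le> ?m * card (S \<inter> W) + (1 - ?m) * k" .
qed simp

text \<open>Dual certificate for the revenue-maximal outcome: utility 1 for the bidders in \<open>B\<close>
  and price 1 for the items in \<open>H\<close>.\<close>
lemma tight_wval_le_MRC: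
  assumes "S \<subseteq> N"
  shows "wval W v S \<le> card (S \<inter> B) + h"
proof (rule wval_le)
  show "finite S" using assms by (rule finite_subset) simp
  fix a assume a: "feasible W S a"
  have "(\<Sum>i\<in>S. v i (a i))
      \<le> (\<Sum>i\<in>S. if i \<in> B then 1 else 0) + (\<Sum>t\<in>W. if t \<in> H then 1 else 0)"
  proof (rule allocation_value_le_prices[OF \<open>finite S\<close> _ a])
    fix i assume "i \<in> S"
    then have "a i \<subseteq> W" using a unfolding feasible_def by blast
    then have "finite (a i)" by (rule finite_subset) simp
    have price: "(\<Sum>t\<in>a i. if t \<in> H then 1 else 0) = real (card (a i \<inter> H))"
      using sum_indicator_eq_card[OF \<open>finite (a i)\<close>, of H 1] by simp
    have "v i (a i) \<le> (if i \<in> B then 1 else 0) + real (card (a i \<inter> H))"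
    proof (cases "i \<in> W")
      case True
      then have "i \<in> a i \<Longrightarrow> i \<notin> B \<Longrightarrow> i \<in> a i \<inter> H" by auto
      then have "i \<in> a i \<Longrightarrow> i \<notin> B \<Longrightarrow> 1 \<le> card (a i \<inter> H)"
        using \<open>finite (a i)\<close> by (auto simp: Suc_le_eq card_gt_0_iff)
      then show ?thesis using True unfolding tight_valuation_def by auto
    next
      case False
      have "H \<subseteq> a i \<Longrightarrow> h \<le> card (a i \<inter> H)"
        using \<open>finite (a i)\<close> card_mono[of "a i \<inter> H" H] by (simp add: Int_absorb1)
      then show ?thesis using False unfolding tight_valuation_def by auto
    qed
    then show "v i (a i) \<le> (if i \<in> B then 1 else 0) + (\<Sum>t\<in>a i. if t \<in> H then 1 else 0)"
      unfolding price .
  qed auto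
  also have "\<dots> = card (S \<inter> B) + h"
    using sum_indicator_eq_card[OF \<open>finite S\<close>, of B 1] sum_indicator_eq_card[of W H 1] tight_h_less
    by (simp add: Int_absorb1)
  finally show "(\<Sum>i\<in>S. v i (a i)) \<le> card (S \<inter> B) + h" .
qed simp

lemma tight_allocation_feasible: "feasible W N (tight_allocation k)"
  unfolding feasible_def tight_allocation_def by auto

lemma card_tight_W: "card (N \<inter> W) = k"
  using tight_W_subset by (simp add: Int_absorb1)

lemma tight_allocation_value: "(\<Sum>i\<in>N. v i (tight_allocation k i)) = k"
proof -
  have "(\<Sum>i\<in>N. v i (tight_allocation k i)) = (\<Sum>i\<in>N. if i \<in> W then 1 else 0)"
    by (rule sum.cong) (auto simp: tight_valuation_def tight_allocation_def)
  then show ?thesis using sum_indicator_eq_card[of N W 1] card_tight_W by simp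
qed

lemma tight_wval_N: "wval W v N = k"
proof (rule antisym)
  show "wval W v N \<le> k"
    using tight_wval_le_BLO[of N] card_tight_W by (simp add: algebra_simps)
  show "k \<le> wval W v N"
    using allocation_value_le_wval[OF _ _ tight_allocation_feasible, of v] tight_allocation_value
    by simp
qed

lemma tight_is_CA: "is_CA (2 * k) W v"
  unfolding is_CA_def tight_valuation_def by auto

lemma tight_opt_alloc: "opt_alloc (2 * k) W v (tight_allocation k)"
  unfolding opt_alloc_def
  using tight_allocation_feasible tight_allocation_value tight_wval_N by simp

lemma tight_winners: "winners (2 * k) (tight_allocation k) = W"
  unfolding winners_def tight_allocation_def bidders_def by auto


lemma tight_core_loser:
  assumes "\<pi> \<in> core (2 * k) W v" "i \<in> N - W"
  shows "\<pi> i = 0"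
  using assms core_payment_eq_0_if_value_0[OF tight_is_CA tight_opt_alloc assms(1)]
  by (simp add: tight_allocation_def tight_valuation_def)

lemma tight_core_sum: "\<pi> \<in> core (2 * k) W v \<Longrightarrow> sum \<pi> N = sum \<pi> W"
  using core_sum_eq_sum_winners[OF tight_is_CA tight_opt_alloc, of \<pi> N] tight_W_subset
  by (simp add: tight_winners Int_absorb1)

lemma tight_BLO_core: "tight_BLO k \<in> core (2 * k) W v"
  unfolding core_def
proof (intro CollectI conjI ballI allI impI)
  fix S assume "S \<subseteq> N"
  let ?m = "1 / real (h + 1)"
  have "(N - S) \<inter> W = W - S" using tight_W_subset by blast
  then have "card ((N - S) \<inter> W) + card (S \<inter> W) = k"
    using card_Int_Diff[of W S] by (simp add: Int_commute)
  then have "real (card ((N - S) \<inter> W)) = real k - real (card (S \<inter> W))"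
    by (simp flip: of_nat_add)
  then have "(\<Sum>i\<in>N - S. tight_BLO k i) = ?m * k - ?m * card (S \<inter> W)"
    using sum_indicator_eq_card[of "N - S" W ?m] unfolding tight_BLO_def
    by (simp add: right_diff_distrib)
  then show "(\<Sum>i\<in>N - S. tight_BLO k i) \<le> wval W v N - wval W v S"
    using tight_wval_le_BLO[OF \<open>S \<subseteq> N\<close>] tight_wval_N by (simp add: algebra_simps)
qed (auto simp: tight_BLO_def bidders_def)

lemma tight_MRC_core: "tight_MRC k \<in> core (2 * k) W v"
  unfolding core_def
proof (intro CollectI conjI ballI allI impI)
  fix S assume "S \<subseteq> N"
  have "B \<subseteq> N" unfolding bidders_def by auto
  then have "(N - S) \<inter> B = B - S" by blast
  then have "card ((N - S) \<inter> B) + card (S \<inter> B) = k - h"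
    using card_Int_Diff[of B S] by (simp add: Int_commute)
  moreover have "(\<Sum>i\<in>N - S. tight_MRC k i) = card ((N - S) \<inter> B)"
    using sum_indicator_eq_card[of "N - S" B 1] unfolding tight_MRC_def by simp
  ultimately show "(\<Sum>i\<in>N - S. tight_MRC k i) \<le> wval W v N - wval W v S"
    using tight_wval_le_MRC[OF \<open>S \<subseteq> N\<close>] tight_wval_N tight_h_less by (simp add: of_nat_diff)
qed (auto simp: tight_MRC_def bidders_def)

text \<open>Dropping a package bidder \<open>k + b\<close> together with the winners \<open>H \<union> {b}\<close> it competes
  with costs only 1: the winners in \<open>B - {b}\<close> keep their items and \<open>k + b\<close> takes \<open>H \<union> {b}\<close>.\<close>
lemma tight_wval_without_package:
  assumes "b \<in> B"
  shows "real k - 1 \<le> wval W v (N - (H \<union> {b}))"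
proof -
  define S where "S = N - (H \<union> {b})"
  define a where "a = (\<lambda>i. if i \<in> B - {b} then {i} else if i = k + b then H \<union> {b} else {})"
  have "feasible W S a" unfolding feasible_def a_def using assms by auto
  have package_value: "v i (a i) = (if i \<in> B - {b} then 1 else 0) + (if i = k + b then real h else 0)"
    for i
  proof (cases "i \<in> B - {b}")
    case True
    then have "i \<in> W" "i \<in> a i" "i \<noteq> k + b" using assms unfolding a_def by auto
    then show ?thesis using True unfolding tight_valuation_def by simp
  next
    case False
    show ?thesis
    proof (cases "i = k + b")
      case True
      then have "i \<notin> W" "i - k \<in> B" "a i = H \<union> {i - k}"
        using assms \<open>i \<notin> B - {b}\<close> unfolding a_def by auto
      then show ?thesis using True False unfolding tight_valuation_def by simp
    next
      case False
      then have "a i = {}" using \<open>i \<notin> B - {b}\<close> unfolding a_def by simp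
      then show ?thesis using False \<open>i \<notin> B - {b}\<close> unfolding tight_valuation_def by simp
    qed
  qed
  have "k + b \<in> S" using assms unfolding S_def bidders_def by auto
  have "S \<inter> (B - {b}) = B - {b}" unfolding S_def bidders_def by auto
  have "(\<Sum>i\<in>S. v i (a i))
      = (\<Sum>i\<in>S. if i \<in> B - {b} then 1 else 0) + (\<Sum>i\<in>S. if i = k + b then real h else 0)"
    by (simp add: package_value sum.distrib)
  also have "\<dots> = card (B - {b}) + real h"
    using sum_indicator_eq_card[of S "B - {b}" 1] \<open>k + b \<in> S\<close> \<open>S \<inter> (B - {b}) = B - {b}\<close>
    unfolding S_def by (simp add: sum.delta')
  also have "\<dots> = real k - 1"
    using assms tight_h_less by (simp add: of_nat_diff)
  finally have "(\<Sum>i\<in>S. v i (a i)) = real k - 1" .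
  then show ?thesis
    using allocation_value_le_wval[OF _ _ \<open>feasible W S a\<close>, of v] unfolding S_def by simp
qed

lemma tight_core_package_le:
  assumes "\<pi> \<in> core (2 * k) W v" "b \<in> B"
  shows "sum \<pi> H + \<pi> b \<le> 1"
proof -
  have "N - (N - (H \<union> {b})) = H \<union> {b}" using assms(2) unfolding bidders_def by auto
  moreover have "sum \<pi> (H \<union> {b}) = sum \<pi> H + \<pi> b" using assms(2) by simp
  moreover have "sum \<pi> (N - (N - (H \<union> {b}))) \<le> wval W v N - wval W v (N - (H \<union> {b}))"
    using assms(1) unfolding core_def by blast
  ultimately show ?thesis using tight_wval_without_package[OF assms(2)] tight_wval_N by simp
qed

text \<open>Summing the package constraints over \<open>b \<in> B\<close> counts the payments of \<open>H\<close> at least once.\<close>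
lemma tight_MRC_is_MRC: "is_MRC (2 * k) W v (tight_MRC k)"
  unfolding is_MRC_def
proof (intro conjI ballI)
  show "tight_MRC k \<in> core (2 * k) W v" by (rule tight_MRC_core)
  fix \<pi> assume \<pi>: "\<pi> \<in> core (2 * k) W v"
  have "0 \<le> sum \<pi> H" using \<pi> tight_h_less unfolding core_def bidders_def by (intro sum_nonneg) auto
  moreover have "1 \<le> real (k - h)" using tight_h_less by simp
  ultimately have "sum \<pi> H + sum \<pi> B \<le> real (k - h) * sum \<pi> H + sum \<pi> B"
    using mult_right_mono[of 1 "real (k - h)" "sum \<pi> H"] by simp
  also have "\<dots> = (\<Sum>b\<in>B. sum \<pi> H + \<pi> b)" by (simp add: sum.distrib)
  also have "\<dots> \<le> (\<Sum>b\<in>B. 1)" by (intro sum_mono tight_core_package_le[OF \<pi>])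
  finally have "sum \<pi> H + sum \<pi> B \<le> real (k - h)" by simp
  moreover have "W = H \<union> B" using tight_h_less by auto
  then have "sum \<pi> W = sum \<pi> H + sum \<pi> B" by (simp add: sum.union_disjoint)
  moreover have "sum (tight_MRC k) N = real (k - h)"
    using sum_indicator_eq_card[of N B 1] unfolding tight_MRC_def
    by (simp add: Int_absorb1 bidders_def)
  ultimately show "(\<Sum>i\<in>N. \<pi> i) \<le> (\<Sum>i\<in>N. tight_MRC k i)" using tight_core_sum[OF \<pi>] by simp
qed


lemma tight_core_eq_BLO:
  assumes \<pi>: "\<pi> \<in> core (2 * k) W v" and ge: "\<And>i. i \<in> W \<Longrightarrow> 1 / real (h + 1) \<le> \<pi> i"
  shows "\<pi> = tight_BLO k"
proof
  fix i
  show "\<pi> i = tight_BLO k i"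
  proof (cases "i \<in> W")
    case True
    define b where "b = (if i \<in> B then i else k)"
    have "b \<in> B" "b \<notin> H" using tight_h_less by (auto simp: b_def)
    then have "sum \<pi> (H \<union> {b}) \<le> real (card (H \<union> {b})) * (1 / real (h + 1))"
      using tight_core_package_le[OF \<pi> \<open>b \<in> B\<close>] by (simp add: add.commute)
    moreover have "i \<in> H \<union> {b}" "H \<union> {b} \<subseteq> W" using True \<open>b \<in> B\<close> by (auto simp: b_def)
    ultimately have "\<pi> i = 1 / real (h + 1)"
      using ge by (intro eq_if_sum_le_card_mult[of "H \<union> {b}"]) auto
    then show ?thesis using True unfolding tight_BLO_def by simp
  next
    case False
    then have "\<pi> i = 0"
      using tight_core_loser[OF \<pi>, of i] \<pi> unfolding core_def by (cases "i \<in> N") auto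
    then show ?thesis using False unfolding tight_BLO_def by simp
  qed
qed

text \<open>The \<open>k\<close> losers pay nothing in every core vector, so position \<open>k\<close> of the sorted vector
  decides: it is \<open>1 / (h + 1)\<close> for the BLO candidate, and a core vector paying every winner at
  least that much coincides with it.\<close>
lemma tight_BLO_is_BLO: "is_BLO (2 * k) W v (tight_BLO k)"
  unfolding is_BLO_def
proof (intro conjI notI)
  let ?m = "1 / real (h + 1)" and ?x = "sorted_entries (2 * k) (tight_BLO k)"
  show "tight_BLO k \<in> core (2 * k) W v" by (rule tight_BLO_core)
  assume "\<exists>\<pi>\<in>core (2 * k) W v. leximin_dominates (2 * k) \<pi> (tight_BLO k)"
  then obtain \<pi> r where \<pi>: "\<pi> \<in> core (2 * k) W v" and "r < 2 * k"
    and equal: "\<forall>t<r. sorted_entries (2 * k) \<pi> ! t = ?x ! t"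
    and greater: "?x ! r < sorted_entries (2 * k) \<pi> ! r"
    unfolding leximin_dominates_def by blast
  let ?y = "sorted_entries (2 * k) \<pi>"
  have card_losers: "card (N - W) = k"
    using tight_W_subset by (simp add: card_Diff_subset bidders_def)
  have losers: "N - W \<subseteq> {i \<in> N. P (\<pi> i)}" if "P 0" for P
    using tight_core_loser[OF \<pi>] that by auto
  have x_r: "0 \<le> ?x ! r" using \<open>r < 2 * k\<close> nth_mem[of r ?x] by (auto simp: set_sorted_entries tight_BLO_def)
  have y_low: "?y ! t \<le> 0" if "t < k" for t
  proof (rule sorted_nth_le_if_count)
    show "t < length (filter (\<lambda>z. z \<le> 0) ?y)"
      using card_mono[OF _ losers[of "\<lambda>z. z \<le> 0"]] card_losers that
      by (simp add: length_filter_sorted_entries)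
  qed simp
  have x_k: "?m \<le> ?x ! k"
  proof (rule sorted_nth_ge_if_count)
    have "{i \<in> N. tight_BLO k i < ?m} = N - W" unfolding tight_BLO_def by auto
    then show "length (filter (\<lambda>z. z < ?m) ?x) \<le> k"
      using card_losers by (simp add: length_filter_sorted_entries)
  qed (use k in simp_all)
  have y_k: "?y ! k < ?m"
  proof (cases "\<forall>i\<in>W. ?m \<le> \<pi> i")
    case True
    then show ?thesis using tight_core_eq_BLO[OF \<pi>] greater by simp
  next
    case False
    then obtain w where "w \<in> W" "\<pi> w < ?m" by (auto simp: not_le)
    then have "insert w (N - W) \<subseteq> {i \<in> N. \<pi> i < ?m}"
      using losers[of "\<lambda>z. z < ?m"] tight_W_subset by auto
    from card_mono[OF _ this] have "k < length (filter (\<lambda>z. z < ?m) ?y)"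
      using card_losers \<open>w \<in> W\<close> by (simp add: length_filter_sorted_entries)
    then show ?thesis by (intro sorted_nth_less_if_count) simp_all
  qed
  consider "r < k" | "r = k" | "k < r" by linarith
  then show False
  proof cases
    case 1
    then show False using x_r y_low[of r] greater by simp
  next
    case 2
    then show False using x_k y_k greater by simp
  next
    case 3
    then show False using x_k y_k equal by auto
  qed
qed

lemma tight_revenues:
  "0 < (\<Sum>i\<in>N. tight_MRC k i)"
  "(\<Sum>i\<in>N. tight_BLO k i) = blo_factor k * (\<Sum>i\<in>N. tight_MRC k i)"
proof -
  have "B \<subseteq> N" unfolding bidders_def by auto
  then have MRC: "(\<Sum>i\<in>N. tight_MRC k i) = real (k - h)"
    using sum_indicator_eq_card[of N B 1] unfolding tight_MRC_def by (simp add: Int_absorb1)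
  then show "0 < (\<Sum>i\<in>N. tight_MRC k i)" using tight_h_less by simp
  have "(\<Sum>i\<in>N. tight_BLO k i) = real k / real (h + 1)"
    using sum_indicator_eq_card[of N W "1 / real (h + 1)"] card_tight_W unfolding tight_BLO_def
    by simp
  also have "\<dots> = blo_factor k * real (k - h)"
  proof -
    have cancel: "real k / real (h + 1) = 4 * real k / (4 * real (h + 1) * d) * d" if "d \<noteq> 0"
      for d :: real
    proof -
      have "(4 * d) * real k / ((4 * d) * real (h + 1)) = real k / real (h + 1)"
        using that by (intro mult_divide_mult_cancel_left) simp
      then show ?thesis by (simp add: ac_simps)
    qed
    have "real (k - h) \<noteq> 0" using tight_h_less by simp
    from cancel[OF this] show ?thesis
      unfolding blo_factor_eq[OF k] four_mul_tight_h[OF k, symmetric] .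
  qed
  finally show "(\<Sum>i\<in>N. tight_BLO k i) = blo_factor k * (\<Sum>i\<in>N. tight_MRC k i)"
    unfolding MRC .
qed

end

theorem theorem3:
  shows "(\<forall>n (M::'m set) v a pBLO pMRC.
            is_CA n M v \<and> opt_alloc n M v a \<and> winners n a \<noteq> {} \<and>
            is_BLO n M v pBLO \<and> is_MRC n M v pMRC \<longrightarrow>
            (\<Sum>i\<in>bidders n. pBLO i) \<ge> blo_factor (card (winners n a)) * (\<Sum>i\<in>bidders n. pMRC i))
       \<and> (\<forall>k::nat. k \<ge> 1 \<longrightarrow>
            (\<exists>n (M::nat set) v a pBLO pMRC.
               is_CA n M v \<and> opt_alloc n M v a \<and> card (winners n a) = k \<and>
               is_BLO n M v pBLO \<and> is_MRC n M v pMRC \<and>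
               (\<Sum>i\<in>bidders n. pMRC i) > 0 \<and>
               (\<Sum>i\<in>bidders n. pBLO i) = blo_factor k * (\<Sum>i\<in>bidders n. pMRC i)))"
proof (intro conjI allI impI)
  fix n and M :: "'m set" and v a pBLO pMRC
  assume "is_CA n M v \<and> opt_alloc n M v a \<and> winners n a \<noteq> {} \<and>
    is_BLO n M v pBLO \<and> is_MRC n M v pMRC"
  then show "blo_factor (card (winners n a)) * (\<Sum>i\<in>bidders n. pMRC i) \<le> (\<Sum>i\<in>bidders n. pBLO i)"
    using BLO_revenue_ge_blo_factor_mult_core unfolding is_MRC_def by blast
next
  fix k :: nat
  assume "1 \<le> k"
  then show "\<exists>n (M::nat set) v a pBLO pMRC.
      is_CA n M v \<and> opt_alloc n M v a \<and> card (winners n a) = k \<and>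
      is_BLO n M v pBLO \<and> is_MRC n M v pMRC \<and> (\<Sum>i\<in>bidders n. pMRC i) > 0 \<and>
      (\<Sum>i\<in>bidders n. pBLO i) = blo_factor k * (\<Sum>i\<in>bidders n. pMRC i)"
    using tight_is_CA tight_opt_alloc tight_winners tight_BLO_is_BLO tight_MRC_is_MRC
      tight_revenues
    by (intro exI[of _ "2 * k"] exI[of _ "{1..k}"] exI[of _ "tight_valuation k"]
        exI[of _ "tight_allocation k"] exI[of _ "tight_BLO k"] exI[of _ "tight_MRC k"]) simp
qed

end
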